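(* Let $T$ be a tournament and $X=(v_1,\dots,v_k)$, $k\ge2$, a list of vertices satisfying the $U$-property. Then $v_k$ has exactly one in-neighbour $w$ in $V(T)\setminus X$; let $X'=(v_1,\dots,v_k,w)$. (i) If $d^-(w)=d^-(v_k)$, then $T[X']$ is a $U$-tournament and $X'$ dominates $T$. (ii) If $d^-(w)=d^-(v_k)+1$, then $X'$ is contained in a set $Y\subseteq V(T)$ such that $T[Y]$ is a $U$-tournament and $Y$ dominates or quasi-dominates $T$. (iii) If $d^-(w)>d^-(v_k)+1$, then $T[X]$ is a $U$-tournament and $X$ $(w,v_k)$-quasi-dominates $T$. In every case, $X$ is contained in a set $Y$ such that $T[Y]$ is a $U$-tournament and $Y$ dominates or quasi-dominates $T$.
   Context: A tournament is a digraph with exactly one arc between each pair of distinct vertices; $d^-(v)$ is the in-degree of $v$ in $T$. A list $(v_1,\dots,v_k)$, $k\ge2$, satisfies the $U$-property if $d^-(v_1)=1$ and for each $i\in\{2,\dots,k\}$, $(v_i,v_{i-1})\in A(T)$ and $d^-(v_i)=i-1$. $U_m$ is the tournament on $\{x_1,\dots,x_m\}$ with arcs $(x_{i+1},x_i)$ for $i\in[m-1]$ and $(x_i,x_j)$ for $1\le i<m$, $i+1<j\le m$; a $U$-tournament is a tournament isomorphic to some $U_m$. A set $Y$ dominates $T$ if $(y,z)\in A(T)$ for all $y\in Y$, $z\in V(T)\setminus Y$. $Y$ $(b,a)$-quasi-dominates $T$ if: $(b,a)\in A(T)$ with $a\in Y$, $b\notin Y$; $(u,v)\in A(T)$ for every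 $(u,v)\in (Y\times(V(T)\setminus Y))\setminus\{(a,b)\}$; $d^-(b)\ge|Y|+1$; and $a$ has an out-neighbour in $Y$. $Y$ quasi-dominates $T$ if it $(b,a)$-quasi-dominates $T$ for some $a,b$. *)

theory Defs
  imports Main
begin

definition tournament :: "'a set \<Rightarrow> ('a \<times> 'a) set \<Rightarrow> bool" where
  "tournament V A \<longleftrightarrow> finite V \<and> A \<subseteq> V \<times> V \<and>
     (\<forall>v\<in>V. (v, v) \<notin> A) \<and>
     (\<forall>u\<in>V. \<forall>v\<in>V. u \<noteq> v \<longrightarrow> ((u, v) \<in> A \<longleftrightarrow> (v, u) \<notin> A))"

definition indeg :: "'a set \<Rightarrow> ('a \<times> 'a) set \<Rightarrow> 'a \<Rightarrow> nat" where
  "indeg V A v = card {u \<in> V. (u, v) \<in> A}"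

text \<open>U-property; the list is 0-indexed, so v_i = xs ! (i - 1).\<close>
definition U_property :: "'a set \<Rightarrow> ('a \<times> 'a) set \<Rightarrow> 'a list \<Rightarrow> bool" where
  "U_property V A xs \<longleftrightarrow> length xs \<ge> 2 \<and> set xs \<subseteq> V \<and>
     indeg V A (xs ! 0) = 1 \<and>
     (\<forall>j. 1 \<le> j \<and> j < length xs \<longrightarrow>
          (xs ! j, xs ! (j - 1)) \<in> A \<and> indeg V A (xs ! j) = j)"

definition U_arcs :: "nat \<Rightarrow> (nat \<times> nat) set" where
  "U_arcs m = {(i + 1, i) | i. 1 \<le> i \<and> i < m} \<union>
              {(i, j) | i j. 1 \<le> i \<and> i < m \<and> i + 1 < j \<and> j \<le> m}"

definition is_U_tournament :: "'a set \<Rightarrow> ('a \<times> 'a) set \<Rightarrow> bool" where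
  "is_U_tournament Y A \<longleftrightarrow> (\<exists>m f. bij_betw f Y {1..m} \<and>
     (\<forall>u\<in>Y. \<forall>v\<in>Y. (u, v) \<in> A \<longleftrightarrow> (f u, f v) \<in> U_arcs m))"

definition dominates :: "'a set \<Rightarrow> ('a \<times> 'a) set \<Rightarrow> 'a set \<Rightarrow> bool" where
  "dominates V A Y \<longleftrightarrow> (\<forall>y\<in>Y. \<forall>z\<in>V - Y. (y, z) \<in> A)"

definition quasi_dominates_by :: "'a set \<Rightarrow> ('a \<times> 'a) set \<Rightarrow> 'a set \<Rightarrow> 'a \<Rightarrow> 'a \<Rightarrow> bool" where
  "quasi_dominates_by V A Y b a \<longleftrightarrow>
     (b, a) \<in> A \<and> a \<in> Y \<and> b \<in> V \<and> b \<notin> Y \<and>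
     (\<forall>(u, v) \<in> (Y \<times> (V - Y)) - {(a, b)}. (u, v) \<in> A) \<and>
     indeg V A b \<ge> card Y + 1 \<and>
     (\<exists>y\<in>Y. (a, y) \<in> A)"

definition quasi_dominates :: "'a set \<Rightarrow> ('a \<times> 'a) set \<Rightarrow> 'a set \<Rightarrow> bool" where
  "quasi_dominates V A Y \<longleftrightarrow> (\<exists>a b. quasi_dominates_by V A Y b a)"

end

theory Submission
  imports Defs
begin

text \<open>
  The in-degree conditions of the U-property determine the list completely. By induction along
  the list, the in-neighbours of v_i (for i < k) are exactly the v_j with j < i - 1 together with
  v_(i+1): these are d^-(v_i) vertices that are forced to be in-neighbours. Hence T[X] is a
  U-tournament and v_1, ..., v_(k-1) have no in-neighbour outside X, while v_k, of in-degree
  k - 1, has exactly one, w. As v_1, ..., v_(k-1) all point to w, d^-(w) \<ge> k - 1 = d^-(v_k).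
  If equality holds these are all in-neighbours of w and X' dominates T; if d^-(w) = k then X'
  again has the U-property and we iterate; otherwise X is (w, v_k)-quasi-dominating.
\<close>

definition in_nbrs :: "'a set \<Rightarrow> ('a \<times> 'a) set \<Rightarrow> 'a \<Rightarrow> 'a set" where
  "in_nbrs V A v = {u \<in> V. (u, v) \<in> A}"

lemma indeg_eq_card_in_nbrs: "indeg V A v = card (in_nbrs V A v)"
  by (simp add: indeg_def in_nbrs_def)

lemma tournament_finite: "tournament V A \<Longrightarrow> finite V"
  by (simp add: tournament_def)

lemma tournament_arcD:
  assumes "tournament V A" "(u, v) \<in> A"
  shows "u \<in> V" "v \<in> V" "u \<noteq> v" "(v, u) \<notin> A"
proof -
  show "u \<in> V" "v \<in> V"
    using assms unfolding tournament_def by auto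
  then show "u \<noteq> v" "(v, u) \<notin> A"
    using assms unfolding tournament_def by metis+
qed

lemma tournament_arcI:
  assumes "tournament V A" "u \<in> V" "v \<in> V" "u \<noteq> v" "(v, u) \<notin> A"
  shows "(u, v) \<in> A"
  using assms unfolding tournament_def by blast

lemma finite_in_nbrs: "tournament V A \<Longrightarrow> finite (in_nbrs V A v)"
  unfolding in_nbrs_def by (simp add: tournament_finite)

lemma in_nbrs_eqI:
  assumes "tournament V A" "K \<subseteq> in_nbrs V A v" "indeg V A v \<le> card K"
  shows "in_nbrs V A v = K"
  using assms card_seteq finite_in_nbrs by (metis indeg_eq_card_in_nbrs)

definition U_pattern :: "('a \<times> 'a) set \<Rightarrow> 'a list \<Rightarrow> bool" where
  "U_pattern A ys \<longleftrightarrow>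
     (\<forall>i < length ys. \<forall>j < length ys. (ys ! j, ys ! i) \<in> A \<longleftrightarrow> j + 1 < i \<or> j = i + 1)"

lemma U_arcs_iff:
  "a \<in> {1..m} \<Longrightarrow> b \<in> {1..m} \<Longrightarrow> (a, b) \<in> U_arcs m \<longleftrightarrow> a + 1 < b \<or> a = b + 1"
  unfolding U_arcs_def by auto

lemma is_U_tournamentI:
  assumes g: "bij_betw g {1..m} Y"
    and arcs: "\<And>a b. a \<in> {1..m} \<Longrightarrow> b \<in> {1..m} \<Longrightarrow> (g a, g b) \<in> A \<longleftrightarrow> (a, b) \<in> U_arcs m"
  shows "is_U_tournament Y A"
  unfolding is_U_tournament_def
proof (intro exI conjI ballI)
  let ?f = "inv_into {1..m} g"
  show "bij_betw ?f Y {1..m}"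
    using g by (rule bij_betw_inv_into)
  fix u v assume "u \<in> Y" "v \<in> Y"
  then have "?f u \<in> {1..m}" "?f v \<in> {1..m}" "g (?f u) = u" "g (?f v) = v"
    using g by (auto simp: bij_betw_def inv_into_into f_inv_into_f)
  then show "(u, v) \<in> A \<longleftrightarrow> (?f u, ?f v) \<in> U_arcs m"
    using arcs by metis
qed

lemma U_pattern_imp_is_U_tournament:
  assumes "distinct ys" "U_pattern A ys"
  shows "is_U_tournament (set ys) A"
proof (rule is_U_tournamentI)
  let ?m = "length ys"
  have "bij_betw (\<lambda>k. k - 1) {1..?m} {..<?m}"
    by (rule bij_betw_byWitness[where f' = Suc]) auto
  moreover have "bij_betw ((!) ys) {..<?m} (set ys)"
    using assms(1) by (simp add: bij_betw_nth)
  ultimately show "bij_betw (\<lambda>k. ys ! (k - 1)) {1..?m} (set ys)"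
    using bij_betw_trans by (fastforce simp: comp_def)
  fix a b assume "a \<in> {1..?m}" "b \<in> {1..?m}"
  then show "(ys ! (a - 1), ys ! (b - 1)) \<in> A \<longleftrightarrow> (a, b) \<in> U_arcs ?m"
    using assms(2) U_arcs_iff by (auto simp: U_pattern_def)
qed

lemma U_pattern_snoc:
  assumes "U_pattern A xs" "(w, w) \<notin> A"
    and "\<And>j. j < length xs \<Longrightarrow> (xs ! j, w) \<in> A \<longleftrightarrow> j + 1 < length xs"
    and "\<And>i. i < length xs \<Longrightarrow> (w, xs ! i) \<in> A \<longleftrightarrow> i + 1 = length xs"
  shows "U_pattern A (xs @ [w])"
  unfolding U_pattern_def
proof (intro allI impI)
  fix i j assume "i < length (xs @ [w])" "j < length (xs @ [w])"
  then consider "i < length xs" "j < length xs" | "i < length xs" "j = length xs"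
    | "i = length xs" "j < length xs" | "i = length xs" "j = length xs"
    by fastforce
  then show "((xs @ [w]) ! j, (xs @ [w]) ! i) \<in> A \<longleftrightarrow> j + 1 < i \<or> j = i + 1"
    by cases (use assms in \<open>auto simp: U_pattern_def nth_append\<close>)
qed

locale U_list =
  fixes V :: "'a set" and A :: "('a \<times> 'a) set" and xs :: "'a list"
  assumes tournament: "tournament V A" and U: "U_property V A xs"
begin

lemma length_ge_2: "2 \<le> length xs"
  and set_subset: "set xs \<subseteq> V"
  using U unfolding U_property_def by simp_all

lemma arc_Suc_nth: "Suc j < length xs \<Longrightarrow> (xs ! Suc j, xs ! j) \<in> A"
  using U unfolding U_property_def by (metis diff_Suc_1 le_add1 plus_1_eq_Suc)

lemma indeg_nth: "i < length xs \<Longrightarrow> indeg V A (xs ! i) = max 1 i"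
  using U unfolding U_property_def by (cases i) (auto simp del: One_nat_def)

lemma nth_in_V: "i < length xs \<Longrightarrow> xs ! i \<in> V"
  using set_subset by auto

lemma distinct_xs: "distinct xs"
proof -
  \<comment> \<open>Only v_1 and v_2 share an in-degree, and they are joined by an arc.\<close>
  have "xs ! i \<noteq> xs ! j" if "i < j" "j < length xs" for i j
  proof
    assume eq: "xs ! i = xs ! j"
    then have "max 1 i = max 1 j"
      using indeg_nth that by (metis order.strict_trans)
    then have "i = 0" "j = 1"
      using that(1) by linarith+
    then show False
      using arc_Suc_nth[of 0] tournament_arcD(3)[OF tournament] eq that(2) by auto
  qed
  then show ?thesis
    unfolding distinct_conv_nth by (metis linorder_neqE_nat)
qed

lemma last_eq_nth: "last xs = xs ! (length xs - 1)"
  using length_ge_2 by (intro last_conv_nth) auto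

lemma nth_eq_last_iff: "i < length xs \<Longrightarrow> xs ! i = last xs \<longleftrightarrow> i + 1 = length xs"
  using distinct_xs length_ge_2 by (auto simp: last_eq_nth nth_eq_iff_index_eq)

lemma indeg_last: "indeg V A (last xs) = length xs - 1"
  using indeg_nth[of "length xs - 1"] length_ge_2 last_eq_nth by simp

lemma card_nth_image_lessThan: "k \<le> length xs \<Longrightarrow> card ((!) xs ` {..<k}) = k"
  using distinct_xs by (simp add: card_image inj_on_def nth_eq_iff_index_eq)

lemma nth_mem_nth_image:
  "j < length xs \<Longrightarrow> K \<subseteq> {..<length xs} \<Longrightarrow> xs ! j \<in> (!) xs ` K \<longleftrightarrow> j \<in> K"
  using distinct_xs by (auto simp: nth_eq_iff_index_eq)

lemma arc_from_lower:
  assumes "j + 1 < i" "i < length xs"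
    and "in_nbrs V A (xs ! j) = (!) xs ` {k. k + 1 < j \<or> k = j + 1}"
  shows "(xs ! j, xs ! i) \<in> A"
proof (rule tournament_arcI[OF tournament])
  have "xs ! i \<notin> (!) xs ` {k. k + 1 < j \<or> k = j + 1}"
    using assms(1,2) distinct_xs by (auto simp: nth_eq_iff_index_eq)
  then show "(xs ! i, xs ! j) \<notin> A"
    using assms(2,3) nth_in_V by (auto simp: in_nbrs_def)
  show "xs ! j \<noteq> xs ! i"
    using assms(1,2) distinct_xs by (simp add: nth_eq_iff_index_eq)
qed (use assms nth_in_V in auto)

lemma in_nbrs_nth:
  "i + 1 < length xs \<Longrightarrow> in_nbrs V A (xs ! i) = (!) xs ` {j. j + 1 < i \<or> j = i + 1}"
proof (induction i rule: less_induct)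
  case (less i)
  let ?J = "{j. j + 1 < i \<or> j = i + 1}"
  show ?case
  proof (rule in_nbrs_eqI[OF tournament])
    have "(xs ! j, xs ! i) \<in> A" if "j + 1 < i" for j
      using arc_from_lower[OF that _ less.IH] that less.prems by simp
    then show "(!) xs ` ?J \<subseteq> in_nbrs V A (xs ! i)"
      using less.prems arc_Suc_nth[of i] nth_in_V by (auto simp: in_nbrs_def)
    have "?J = insert (i + 1) {..<i - 1}"
      by auto
    then have "card ?J = max 1 i"
      by simp
    moreover have "inj_on ((!) xs) ?J"
      using less.prems distinct_xs by (auto simp: inj_on_def nth_eq_iff_index_eq)
    ultimately show "indeg V A (xs ! i) \<le> card ((!) xs ` ?J)"
      using indeg_nth less.prems by (simp add: card_image)
  qed
qed

lemma in_nbrs_nth_subset: "i + 1 < length xs \<Longrightarrow> in_nbrs V A (xs ! i) \<subseteq> set xs"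
  by (auto simp: in_nbrs_nth)

lemma arc_to_last_iff: "j < length xs \<Longrightarrow> (xs ! j, last xs) \<in> A \<longleftrightarrow> j + 2 < length xs"
proof -
  assume j: "j < length xs"
  consider "j + 2 < length xs" | "length xs = j + 2" | "length xs = j + 1"
    using j by linarith
  then show ?thesis
  proof cases
    case 1
    then show ?thesis
      using arc_from_lower[OF _ _ in_nbrs_nth] last_eq_nth by simp
  next
    case 2
    then have "(last xs, xs ! j) \<in> A"
      using arc_Suc_nth[of j] last_eq_nth by simp
    then show ?thesis
      using 2 tournament_arcD(4)[OF tournament] by auto
  next
    case 3
    then show ?thesis
      using tournament_arcD(3)[OF tournament] last_eq_nth by auto
  qed
qed

lemma U_pattern_xs: "U_pattern A xs"
  unfolding U_pattern_def
proof (intro allI impI)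
  fix i j assume "i < length xs" "j < length xs"
  show "(xs ! j, xs ! i) \<in> A \<longleftrightarrow> j + 1 < i \<or> j = i + 1"
  proof (cases "i + 1 < length xs")
    case True
    have "(xs ! j, xs ! i) \<in> A \<longleftrightarrow> xs ! j \<in> in_nbrs V A (xs ! i)"
      using \<open>j < length xs\<close> nth_in_V by (simp add: in_nbrs_def)
    also have "\<dots> \<longleftrightarrow> j \<in> {k. k + 1 < i \<or> k = i + 1}"
      using True \<open>j < length xs\<close> by (simp only: in_nbrs_nth, intro nth_mem_nth_image) auto
    also have "\<dots> \<longleftrightarrow> j + 1 < i \<or> j = i + 1"
      by simp
    finally show ?thesis .
  next
    case False
    then have "i + 1 = length xs"
      using \<open>i < length xs\<close> by simp
    then show ?thesis
      using nth_eq_last_iff[of i] arc_to_last_iff[of j] \<open>j < length xs\<close> by auto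
  qed
qed

lemma is_U_tournament_xs: "is_U_tournament (set xs) A"
  using distinct_xs U_pattern_xs by (rule U_pattern_imp_is_U_tournament)

lemma ex1_outside_in_nbr_last: "\<exists>!w. w \<in> V - set xs \<and> (w, last xs) \<in> A"
proof -
  let ?N = "in_nbrs V A (last xs)"
  have inside: "?N \<inter> set xs = (!) xs ` {..<length xs - 2}"
  proof (intro equalityI subsetI)
    fix u assume "u \<in> ?N \<inter> set xs"
    then obtain j where "j < length xs" "u = xs ! j" "(u, last xs) \<in> A"
      by (auto simp: in_nbrs_def in_set_conv_nth)
    then show "u \<in> (!) xs ` {..<length xs - 2}"
      using arc_to_last_iff by auto
  next
    fix u assume "u \<in> (!) xs ` {..<length xs - 2}"
    then obtain j where "j + 2 < length xs" "u = xs ! j"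
      by (auto simp: less_diff_conv)
    then show "u \<in> ?N \<inter> set xs"
      using arc_to_last_iff[of j] nth_in_V[of j] by (auto simp: in_nbrs_def)
  qed
  have "card (?N - set xs) = card ?N - card (?N \<inter> set xs)"
    using finite_in_nbrs[OF tournament] by (simp add: card_Diff_subset_Int)
  also have "\<dots> = 1"
    using indeg_last card_nth_image_lessThan[of "length xs - 2"] inside length_ge_2
    by (simp add: indeg_eq_card_in_nbrs)
  finally have "card (?N - set xs) = 1" .
  then obtain w where "?N - set xs = {w}"
    using card_1_singletonE by blast
  then show ?thesis
    unfolding in_nbrs_def by (intro ex1I[of _ w]) blast+
qed

end

locale U_list_successor = U_list +
  fixes w :: 'a
  assumes w_outside: "w \<in> V - set xs" and w_arc: "(w, last xs) \<in> A"
begin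

lemma outside_in_nbr_last_unique: "u \<in> V - set xs \<Longrightarrow> (u, last xs) \<in> A \<Longrightarrow> u = w"
  using ex1_outside_in_nbr_last w_outside w_arc by blast

lemma arc_to_outside:
  assumes "y \<in> set xs" "u \<in> V - set xs" "(y, u) \<noteq> (last xs, w)"
  shows "(y, u) \<in> A"
proof (rule tournament_arcI[OF tournament])
  obtain i where i: "i < length xs" "y = xs ! i"
    using assms(1) by (auto simp: in_set_conv_nth)
  show "(u, y) \<notin> A"
  proof (cases "i + 1 < length xs")
    case True
    then show ?thesis
      using in_nbrs_nth_subset[OF True] i assms(2) by (auto simp: in_nbrs_def)
  next
    case False
    then have "y = last xs"
      using i nth_eq_last_iff by simp
    then show ?thesis
      using assms(2,3) outside_in_nbr_last_unique by auto
  qed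
qed (use assms set_subset in auto)

lemma arc_from_w_iff: "i < length xs \<Longrightarrow> (w, xs ! i) \<in> A \<longleftrightarrow> i + 1 = length xs"
  using w_arc w_outside nth_eq_last_iff[of i] in_nbrs_nth_subset[of i]
  by (cases "i + 1 < length xs") (auto simp: in_nbrs_def)

lemma in_nbrs_w_supset: "(!) xs ` {..<length xs - 1} \<subseteq> in_nbrs V A w"
proof
  fix u assume "u \<in> (!) xs ` {..<length xs - 1}"
  then obtain i where i: "i < length xs - 1" "u = xs ! i"
    by auto
  then have "u \<noteq> last xs"
    using nth_eq_last_iff by simp
  then show "u \<in> in_nbrs V A w"
    using arc_to_outside[of u w] i w_outside nth_in_V by (auto simp: in_nbrs_def)
qed

lemma indeg_last_le_indeg_w: "indeg V A (last xs) \<le> indeg V A w"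
  using card_mono[OF finite_in_nbrs[OF tournament] in_nbrs_w_supset] indeg_last
    card_nth_image_lessThan[of "length xs - 1"]
  by (simp add: indeg_eq_card_in_nbrs)

lemma in_nbrs_w_if_indeg_eq:
  assumes "indeg V A w = indeg V A (last xs)"
  shows "in_nbrs V A w = (!) xs ` {..<length xs - 1}"
  using in_nbrs_eqI[OF tournament in_nbrs_w_supset] assms indeg_last
    card_nth_image_lessThan[of "length xs - 1"]
  by simp

lemma is_U_tournament_snoc_if_indeg_eq:
  assumes "indeg V A w = indeg V A (last xs)"
  shows "is_U_tournament (set (xs @ [w])) A"
proof -
  have "U_pattern A (xs @ [w])"
  proof (rule U_pattern_snoc[OF U_pattern_xs])
    show "(w, w) \<notin> A"
      using tournament_arcD(3)[OF tournament] by auto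
    fix j assume "j < length xs"
    then show "(xs ! j, w) \<in> A \<longleftrightarrow> j + 1 < length xs"
      using in_nbrs_w_if_indeg_eq[OF assms] nth_mem_nth_image[of j "{..<length xs - 1}"] nth_in_V
      by (auto simp: in_nbrs_def)
  next
    fix i assume "i < length xs"
    then show "(w, xs ! i) \<in> A \<longleftrightarrow> i + 1 = length xs"
      by (rule arc_from_w_iff)
  qed
  then show ?thesis
    using distinct_xs w_outside by (intro U_pattern_imp_is_U_tournament) auto
qed

lemma dominates_snoc_if_indeg_eq:
  assumes "indeg V A w = indeg V A (last xs)"
  shows "dominates V A (set (xs @ [w]))"
  unfolding dominates_def
proof (intro ballI)
  fix y z assume y: "y \<in> set (xs @ [w])" and z: "z \<in> V - set (xs @ [w])"
  show "(y, z) \<in> A"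
  proof (cases "y = w")
    case True
    have "in_nbrs V A w \<subseteq> set xs"
      unfolding in_nbrs_w_if_indeg_eq[OF assms] by auto
    then have "(z, w) \<notin> A"
      using z by (auto simp: in_nbrs_def)
    then show ?thesis
      using True z w_outside by (intro tournament_arcI[OF tournament]) auto
  next
    case False
    then show ?thesis
      using y z arc_to_outside by auto
  qed
qed

lemma card_outside_snoc_less: "card (V - set (xs @ [w])) < card (V - set xs)"
proof -
  have "card ((V - set xs) - {w}) < card (V - set xs)"
    using w_outside tournament_finite[OF tournament] by (intro card_Diff1_less) auto
  moreover have "V - set (xs @ [w]) = (V - set xs) - {w}"
    by auto
  ultimately show ?thesis
    by simp
qed

lemma U_property_snoc:
  assumes "indeg V A w = indeg V A (last xs) + 1"
  shows "U_property V A (xs @ [w])"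
  unfolding U_property_def
proof (intro conjI allI impI)
  show "2 \<le> length (xs @ [w])" "set (xs @ [w]) \<subseteq> V"
    using length_ge_2 set_subset w_outside by auto
  show "indeg V A ((xs @ [w]) ! 0) = 1"
    using indeg_nth[of 0] length_ge_2 by (cases xs) auto
next
  fix j assume "1 \<le> j \<and> j < length (xs @ [w])"
  then consider "1 \<le> j" "j < length xs" | "j = length xs"
    by fastforce
  then show "((xs @ [w]) ! j, (xs @ [w]) ! (j - 1)) \<in> A"
    by cases (use arc_Suc_nth[of "j - 1"] w_arc last_eq_nth length_ge_2 in \<open>auto simp: nth_append\<close>)
next
  fix j assume "1 \<le> j \<and> j < length (xs @ [w])"
  then consider "1 \<le> j" "j < length xs" | "j = length xs"
    by fastforce
  then show "indeg V A ((xs @ [w]) ! j) = j"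
    by cases (use indeg_nth[of j] assms indeg_last length_ge_2 in \<open>auto simp: nth_append\<close>)
qed

lemma quasi_dominates_by_w:
  assumes "indeg V A (last xs) + 1 < indeg V A w"
  shows "quasi_dominates_by V A (set xs) w (last xs)"
  unfolding quasi_dominates_by_def
proof (intro conjI)
  show "\<forall>(y, u) \<in> set xs \<times> (V - set xs) - {(last xs, w)}. (y, u) \<in> A"
    using arc_to_outside by blast
  show "card (set xs) + 1 \<le> indeg V A w"
    using assms indeg_last length_ge_2 distinct_card[OF distinct_xs] by simp
  have "(last xs, xs ! (length xs - 2)) \<in> A"
    using arc_Suc_nth[of "length xs - 2"] length_ge_2 last_eq_nth
    by (simp add: Suc_diff_Suc numeral_2_eq_2)
  then show "\<exists>y\<in>set xs. (last xs, y) \<in> A"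
    using length_ge_2 by auto
  show "last xs \<in> set xs"
    using length_ge_2 by (intro last_in_set) auto
qed (use w_outside w_arc in auto)

end

lemma U_property_imp_dominating_U_set:
  assumes "tournament V A" "U_property V A xs"
  shows "\<exists>Y. set xs \<subseteq> Y \<and> Y \<subseteq> V \<and> is_U_tournament Y A \<and>
    (dominates V A Y \<or> quasi_dominates V A Y)"
  using assms(2)
proof (induction "card (V - set xs)" arbitrary: xs rule: less_induct)
  case less
  then interpret U_list V A xs
    using assms(1) by unfold_locales
  obtain w where w: "w \<in> V - set xs" "(w, last xs) \<in> A"
    using ex1_outside_in_nbr_last by blast
  then interpret U_list_successor V A xs w
    by unfold_locales
  consider "indeg V A w = indeg V A (last xs)" | "indeg V A w = indeg V A (last xs) + 1"
    | "indeg V A (last xs) + 1 < indeg V A w"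
    using indeg_last_le_indeg_w by linarith
  then show ?case
  proof cases
    case 1
    then show ?thesis
      using is_U_tournament_snoc_if_indeg_eq dominates_snoc_if_indeg_eq set_subset w
      by (intro exI[of _ "set (xs @ [w])"]) auto
  next
    case 2
    from less.hyps[OF card_outside_snoc_less U_property_snoc[OF 2]] obtain Y where
      "set (xs @ [w]) \<subseteq> Y" "Y \<subseteq> V" "is_U_tournament Y A"
      "dominates V A Y \<or> quasi_dominates V A Y"
      by blast
    then show ?thesis
      by auto
  next
    case 3
    then show ?thesis
      using quasi_dominates_by_w is_U_tournament_xs set_subset
      unfolding quasi_dominates_def by blast
  qed
qed

theorem mainTheorem18:
  assumes "tournament V A"
    and "U_property V A xs"
  shows "(\<exists>!w. w \<in> V - set xs \<and> (w, last xs) \<in> A) \<and>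
    (\<forall>w. w \<in> V - set xs \<and> (w, last xs) \<in> A \<longrightarrow>
       (indeg V A w = indeg V A (last xs) \<longrightarrow>
          is_U_tournament (set (xs @ [w])) A \<and> dominates V A (set (xs @ [w]))) \<and>
       (indeg V A w = indeg V A (last xs) + 1 \<longrightarrow>
          (\<exists>Y. set (xs @ [w]) \<subseteq> Y \<and> Y \<subseteq> V \<and> is_U_tournament Y A \<and>
               (dominates V A Y \<or> quasi_dominates V A Y))) \<and>
       (indeg V A w > indeg V A (last xs) + 1 \<longrightarrow>
          is_U_tournament (set xs) A \<and> quasi_dominates_by V A (set xs) w (last xs))) \<and>
    (\<exists>Y. set xs \<subseteq> Y \<and> Y \<subseteq> V \<and> is_U_tournament Y A \<and>
         (dominates V A Y \<or> quasi_dominates V A Y))"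
proof -
  have xs: "U_list V A xs"
    using assms by (rule U_list.intro)
  have w: "U_list_successor V A xs w" if "w \<in> V - set xs \<and> (w, last xs) \<in> A" for w
    using xs that by (simp add: U_list_successor_def U_list_successor_axioms_def)
  show ?thesis
    using U_list.ex1_outside_in_nbr_last[OF xs]
      U_list_successor.is_U_tournament_snoc_if_indeg_eq[OF w]
      U_list_successor.dominates_snoc_if_indeg_eq[OF w]
      U_property_imp_dominating_U_set[OF assms(1) U_list_successor.U_property_snoc[OF w]]
      U_list.is_U_tournament_xs[OF xs] U_list_successor.quasi_dominates_by_w[OF w]
      U_property_imp_dominating_U_set[OF assms]
    by blast
qed

end
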